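(* Let $P_{\mathcal{F}}$ be the probability measure on $\mathscr{P}(2^\omega)$ which is the distribution of $\lambda\circ F_x^{-1}$ when $x\in3^\omega$ is drawn according to $\lambda_3$. Then $P_{\mathcal{F}}$ has barycenter $\lambda$, i.e. for every $\sigma\in2^{<\omega}$, $$\lambda(\llbracket\sigma\rrbracket)=\int_{\mathscr{P}(2^\omega)}\mu(\llbracket\sigma\rrbracket)\,dP_{\mathcal{F}}(\mu),$$ equivalently $\int_{3^\omega}\lambda(F_x^{-1}(\llbracket\sigma\rrbracket))\,d\lambda_3(x)=2^{-|\sigma|}$.
   Context: $\lambda$ is the uniform measure on $2^\omega$ and $\lambda_3$ the uniform measure on $3^\omega$ ($\lambda_3(\llbracket\sigma\rrbracket)=3^{-|\sigma|}$). Let $\sigma_0=\epsilon,\sigma_1=0,\sigma_2=1,\dots$ be the length-lexicographic enumeration of $2^{<\omega}$. For $x\in3^\omega$ label node $\sigma_i$ ($i\ge1$) by $\ell_x(\sigma_i)=x(i-1)$, and let $F_x(y)$ be the sequence obtained from $\ell_x(y\restriction1),\ell_x(y\restriction2),\dots$ by deleting all $2$'s (undefined if only finitely many entries remain). For $\lambda_3$-almost every $x$, $F_x$ is total, so $\lambda\circ F_x^{-1}$ is a Borel probability measure on $2^\omega$. *)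

theory Defs
  imports "HOL-Probability.Probability"
begin

text \<open>Cantor space 2^omega and 3^omega are modelled as nat => nat (digits as naturals).
  lam = uniform (fair coin) measure on {0,1}^omega, lam3 = uniform measure on {0,1,2}^omega.\<close>

definition lam :: "(nat \<Rightarrow> nat) measure" where
  "lam = PiM UNIV (\<lambda>_. measure_pmf (pmf_of_set {0, 1 :: nat}))"

definition lam3 :: "(nat \<Rightarrow> nat) measure" where
  "lam3 = PiM UNIV (\<lambda>_. measure_pmf (pmf_of_set {0, 1, 2 :: nat}))"

definition cyl :: "nat list \<Rightarrow> (nat \<Rightarrow> nat) set" where
  "cyl \<sigma> = {y. \<forall>i < length \<sigma>. y i = \<sigma> ! i}"

definition restr :: "(nat \<Rightarrow> nat) \<Rightarrow> nat \<Rightarrow> nat list" where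
  "restr y n = map y [0..<n]"

text \<open>Position of a binary string in the length-lexicographic enumeration
  sigma_0 = [], sigma_1 = [0], sigma_2 = [1], sigma_3 = [0,0], ...
  i.e. sigma_i = tau iff lenlex_index tau = i.\<close>
definition lenlex_index :: "nat list \<Rightarrow> nat" where
  "lenlex_index \<tau> = 2 ^ length \<tau> - 1 + foldl (\<lambda>a b. 2 * a + b) 0 \<tau>"

text \<open>Label of node tau (nonempty) determined by x: l_x(sigma_i) = x(i-1).\<close>
definition label :: "(nat \<Rightarrow> nat) \<Rightarrow> nat list \<Rightarrow> nat" where
  "label x \<tau> = x (lenlex_index \<tau> - 1)"

definition label_seq :: "(nat \<Rightarrow> nat) \<Rightarrow> (nat \<Rightarrow> nat) \<Rightarrow> nat \<Rightarrow> nat" where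
  "label_seq x y n = label x (restr y (Suc n))"

text \<open>F_x(y): delete all 2's from label_seq; undefined (None) if only finitely many entries remain.\<close>
definition F :: "(nat \<Rightarrow> nat) \<Rightarrow> (nat \<Rightarrow> nat) \<Rightarrow> (nat \<Rightarrow> nat) option" where
  "F x y = (let N = {n. label_seq x y n \<noteq> 2} in
     if infinite N then Some (\<lambda>k. label_seq x y (enumerate N k)) else None)"

definition F_preimage :: "(nat \<Rightarrow> nat) \<Rightarrow> (nat \<Rightarrow> nat) set \<Rightarrow> (nat \<Rightarrow> nat) set" where
  "F_preimage x A = {y \<in> space lam. \<exists>z \<in> A. F x y = Some z}"

end

theory Submission
  imports Defs
begin

text \<open>For binary \<open>y\<close> the labels read along \<open>y\<close> are the entries of \<open>x\<close> at the strictly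
  increasing positions \<open>label_position y n\<close>, so for \<open>\<lambda>\<^sub>3\<close>-random \<open>x\<close> the label sequence is
  again \<open>\<lambda>\<^sub>3\<close>-distributed. Moreover \<open>F x y \<in> \<lbrakk>\<sigma>\<rbrakk>\<close> holds exactly when the label sequence
  has infinitely many entries other than 2 and some finite prefix of it becomes \<open>\<sigma>\<close> once its
  2's are deleted. Conditioning on the first digit, the \<open>\<lambda>\<^sub>3\<close>-probability \<open>p \<sigma>\<close> of the latter
  event satisfies \<open>p (b # \<sigma>) = (p (b # \<sigma>) + p \<sigma>) / 3\<close>, hence \<open>p \<sigma> = 2 ^ - length \<sigma>\<close>, while
  the sequences that are eventually 2 form a null set. Fubini on \<open>\<lambda>\<^sub>3 \<otimes> \<lambda>\<close> turns the integral
  into the \<open>\<lambda>\<close>-average of this constant.\<close>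

lemma measurable_map_upt [measurable]:
  "(\<lambda>x. map x [0..<m]) \<in> PiM UNIV (\<lambda>_. count_space (UNIV :: 'a :: countable set)) \<rightarrow>\<^sub>M count_space UNIV"
proof (induction m)
  case (Suc m)
  have "(\<lambda>x. map x [0..<m] @ [x m]) \<in> PiM UNIV (\<lambda>_. count_space (UNIV :: 'a set)) \<rightarrow>\<^sub>M count_space UNIV"
    by (rule measurable_compose_countable[where f = "\<lambda>l x. l @ [x m]", OF _ Suc]) simp
  then show ?case by simp
qed simp

lemma emeasure_PiM_pmf_case_nat:
  fixes p :: "'a pmf"
  defines "P \<equiv> PiM UNIV (\<lambda>_. measure_pmf p)"
  assumes B: "B \<in> sets P"
  shows "emeasure P B = (\<integral>\<^sup>+s. emeasure P ((\<lambda>\<omega>. case_nat s \<omega>) -` B) \<partial>p)"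
proof -
  interpret sequence_space "measure_pmf p"
    by unfold_locales (simp add: prob_space_measure_pmf)
  let ?f = "\<lambda>(s, \<omega>). case_nat s \<omega>"
  have f: "?f \<in> measure_pmf p \<Otimes>\<^sub>M P \<rightarrow>\<^sub>M P"
    unfolding P_def by measurable
  have "emeasure P B = emeasure (distr (measure_pmf p \<Otimes>\<^sub>M P) P ?f) B"
    unfolding P_def PiM_iter ..
  also have "\<dots> = emeasure (measure_pmf p \<Otimes>\<^sub>M P) (?f -` B \<inter> space (measure_pmf p \<Otimes>\<^sub>M P))"
    by (rule emeasure_distr[OF f B])
  also have "\<dots> = (\<integral>\<^sup>+s. emeasure P (Pair s -` (?f -` B \<inter> space (measure_pmf p \<Otimes>\<^sub>M P))) \<partial>p)"
    unfolding P_def by (rule emeasure_pair_measure_alt) (use f B in \<open>simp add: P_def\<close>)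
  also have "\<dots> = (\<integral>\<^sup>+s. emeasure P ((\<lambda>\<omega>. case_nat s \<omega>) -` B) \<partial>p)"
    by (simp add: space_pair_measure P_def space_PiM vimage_def)
  finally show ?thesis .
qed

lemma measure_PiM_pmf_reindex:
  fixes p :: "'a pmf"
  defines "P \<equiv> PiM UNIV (\<lambda>_. measure_pmf p)"
  assumes g: "inj g" and B: "B \<in> sets P"
  shows "measure P {x. (\<lambda>n. x (g n)) \<in> B} = measure P B"
proof -
  have reindex: "(\<lambda>x n. x (g n)) \<in> P \<rightarrow>\<^sub>M P"
    unfolding P_def by (rule measurable_PiM_single') (auto simp: space_PiM)
  have "distr P P (\<lambda>x n. x (g n)) = P"
    using distr_PiM_reindex[of UNIV "\<lambda>_. measure_pmf p" g UNIV] g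
    by (simp add: P_def restrict_def prob_space_measure_pmf)
  then show ?thesis
    using measure_distr[OF reindex B] by (simp add: P_def space_PiM vimage_def)
qed

lemma integral_measure_Pair_vimage_eq_const:
  assumes "prob_space M" "prob_space N" and Q: "Q \<in> sets (M \<Otimes>\<^sub>M N)"
    and sections: "AE y in N. measure M {x. (x, y) \<in> Q} = c"
  shows "(\<integral>x. measure N (Pair x -` Q) \<partial>M) = c"
proof -
  interpret M: prob_space M by fact
  interpret N: prob_space N by fact
  interpret pair_prob_space M N ..
  have "AE y in N. 0 \<le> c"
    using sections by eventually_elim (metis measure_nonneg)
  then have c: "0 \<le> c" by simp
  have "(\<lambda>x. emeasure N (Pair x -` Q)) \<in> borel_measurable M"
    by (rule N.measurable_emeasure_Pair[OF Q])
  then have meas: "(\<lambda>x. measure N (Pair x -` Q)) \<in> borel_measurable M"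
    unfolding measure_def by (rule borel_measurable_enn2real)
  have "(\<integral>x. measure N (Pair x -` Q) \<partial>M) = enn2real (\<integral>\<^sup>+x. emeasure N (Pair x -` Q) \<partial>M)"
    by (simp add: integral_eq_nn_integral[OF meas] N.emeasure_eq_measure)
  also have "(\<integral>\<^sup>+x. emeasure N (Pair x -` Q) \<partial>M) = emeasure (M \<Otimes>\<^sub>M N) Q"
    by (rule N.emeasure_pair_measure_alt[OF Q, symmetric])
  also have "\<dots> = (\<integral>\<^sup>+y. emeasure M ((\<lambda>x. (x, y)) -` Q) \<partial>N)"
    by (rule emeasure_pair_measure_alt2[OF Q])
  also have "\<dots> = (\<integral>\<^sup>+y. ennreal c \<partial>N)"
    using sections by (intro nn_integral_cong_AE) (auto simp: M.emeasure_eq_measure vimage_def)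
  finally show ?thesis
    using c by (simp add: N.emeasure_space_1)
qed

lemma filter_upt_enumerate:
  fixes S :: "nat set"
  assumes S: "infinite S"
  shows "filter (\<lambda>n. n \<in> S) [0..<enumerate S k] = map (enumerate S) [0..<k]"
proof (rule sorted_distinct_set_unique)
  show "sorted (map (enumerate S) [0..<k])" "distinct (map (enumerate S) [0..<k])"
    using S inj_enumerate[OF S] by (auto simp: sorted_map distinct_map intro: inj_on_subset)
  have "{n \<in> S. n < enumerate S k} = enumerate S ` {..<k}"
  proof (intro equalityI subsetI)
    fix n assume "n \<in> {n \<in> S. n < enumerate S k}"
    then obtain j where "n = enumerate S j" "enumerate S j < enumerate S k"
      using enumerate_Ex[OF S] by (metis mem_Collect_eq)
    then show "n \<in> enumerate S ` {..<k}"
      using S by simp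
  qed (use S enumerate_in_set in auto)
  then show "set (filter (\<lambda>n. n \<in> S) [0..<enumerate S k]) = set (map (enumerate S) [0..<k])"
    by (auto simp: atLeast0LessThan)
qed (auto intro: sorted_wrt_filter)

definition del2_prefix :: "(nat \<Rightarrow> nat) \<Rightarrow> nat \<Rightarrow> nat list" where
  "del2_prefix w m = filter (\<lambda>v. v \<noteq> 2) (map w [0..<m])"

definition del2_cyl :: "nat list \<Rightarrow> (nat \<Rightarrow> nat) set" where
  "del2_cyl \<sigma> = {w. \<exists>m. del2_prefix w m = \<sigma>}"

lemma del2_prefix_0 [simp]: "del2_prefix w 0 = []"
  by (simp add: del2_prefix_def)

lemma del2_cyl_Nil: "del2_cyl [] = UNIV"
  unfolding del2_cyl_def using del2_prefix_0 by blast

lemma del2_prefix_enumerate: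
  assumes "infinite {n. w n \<noteq> 2}"
  shows "del2_prefix w (enumerate {n. w n \<noteq> 2} k) = map (\<lambda>i. w (enumerate {n. w n \<noteq> 2} i)) [0..<k]"
  using filter_upt_enumerate[OF assms, of k]
  by (simp add: del2_prefix_def filter_map comp_def)

lemma del2_prefix_eq_if_length_eq:
  assumes "length (del2_prefix w m) = length (del2_prefix w m')"
  shows "del2_prefix w m = del2_prefix w m'"
proof -
  have extend: "\<exists>r. del2_prefix w m' = del2_prefix w m @ r" if "m \<le> m'" for m m'
    using upt_add_eq_append[of 0 m "m' - m"] that by (simp add: del2_prefix_def)
  show ?thesis
  proof (cases "m \<le> m'")
    case True
    with extend obtain r where "del2_prefix w m' = del2_prefix w m @ r" by blast
    with assms show ?thesis by simp
  next
    case False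
    with extend[of m' m] obtain r where "del2_prefix w m = del2_prefix w m' @ r" by auto
    with assms show ?thesis by simp
  qed
qed

lemma cyl_iff_map_upt: "z \<in> cyl \<sigma> \<longleftrightarrow> map z [0..<length \<sigma>] = \<sigma>"
  unfolding cyl_def list_eq_iff_nth_eq[where ys = \<sigma>] by auto

lemma enumerate_non2_in_cyl_iff:
  assumes inf: "infinite {n. w n \<noteq> 2}"
  shows "(\<lambda>k. w (enumerate {n. w n \<noteq> 2} k)) \<in> cyl \<sigma> \<longleftrightarrow> w \<in> del2_cyl \<sigma>"
proof
  assume "(\<lambda>k. w (enumerate {n. w n \<noteq> 2} k)) \<in> cyl \<sigma>"
  then show "w \<in> del2_cyl \<sigma>"
    unfolding cyl_iff_map_upt del2_cyl_def del2_prefix_enumerate[OF inf, symmetric] by blast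
next
  assume "w \<in> del2_cyl \<sigma>"
  then obtain m where m: "del2_prefix w m = \<sigma>"
    unfolding del2_cyl_def by blast
  let ?m' = "enumerate {n. w n \<noteq> 2} (length \<sigma>)"
  have "length (del2_prefix w ?m') = length \<sigma>"
    by (simp add: del2_prefix_enumerate[OF inf])
  then have "del2_prefix w ?m' = \<sigma>"
    using del2_prefix_eq_if_length_eq[of w m ?m'] m by simp
  then show "(\<lambda>k. w (enumerate {n. w n \<noteq> 2} k)) \<in> cyl \<sigma>"
    unfolding cyl_iff_map_upt del2_prefix_enumerate[OF inf] .
qed

lemma F_in_cyl_iff:
  "(\<exists>z \<in> cyl \<sigma>. F x y = Some z) \<longleftrightarrow>
     label_seq x y \<in> del2_cyl \<sigma> \<inter> {w. infinite {n. w n \<noteq> 2}}"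
  using enumerate_non2_in_cyl_iff[of "label_seq x y" \<sigma>] by (auto simp: F_def Let_def)

lemma prob_space_lam3: "prob_space lam3"
  unfolding lam3_def by (intro prob_space_PiM prob_space_measure_pmf)

lemma space_lam3 [simp]: "space lam3 = UNIV"
  by (simp add: lam3_def space_PiM)

lemma measure_lam3_case_nat:
  assumes B: "B \<in> sets lam3"
  shows "measure lam3 B = (\<Sum>s\<in>{0, 1, 2}. measure lam3 ((\<lambda>\<omega>. case_nat s \<omega>) -` B)) / 3"
proof -
  interpret prob_space lam3 by (rule prob_space_lam3)
  have "emeasure lam3 B = (\<Sum>s\<in>{0, 1, 2}. emeasure lam3 ((\<lambda>\<omega>. case_nat s \<omega>) -` B)) / 3"
    using emeasure_PiM_pmf_case_nat[of B "pmf_of_set {0, 1, 2}", folded lam3_def] B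
    by (simp add: nn_integral_pmf_of_set)
  also have "\<dots> = ennreal ((\<Sum>s\<in>{0, 1, 2}. measure lam3 ((\<lambda>\<omega>. case_nat s \<omega>) -` B)) / 3)"
    by (simp add: emeasure_eq_measure divide_ennreal[symmetric])
  finally show ?thesis
    by (simp add: emeasure_eq_measure)
qed

lemma sets_lam3_del2_cyl: "del2_cyl \<sigma> \<in> sets lam3"
proof -
  have "Measurable.pred lam3 (\<lambda>w. w \<in> del2_cyl \<sigma>)"
    unfolding lam3_def del2_cyl_def del2_prefix_def by measurable
  then show ?thesis by (simp add: pred_def)
qed

lemma sets_lam3_eventually_2: "{w. \<forall>n\<ge>N. w n = 2} \<in> sets lam3"
proof -
  have single: "{w \<in> space lam3. w n \<in> {2}} \<in> sets lam3" for n
    unfolding lam3_def by (rule sets_Collect_single) auto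
  have "{w. \<forall>n\<ge>N. w n = 2} = (\<Inter>n\<in>{N..}. {w \<in> space lam3. w n \<in> {2}})"
    by auto
  also have "\<dots> \<in> sets lam3"
    using sets.top[of lam3] single by (intro sets.countable_INT'') (auto intro: countableI_type)
  finally show ?thesis .
qed

lemma infinite_non2_eq:
  "{w :: nat \<Rightarrow> nat. infinite {n. w n \<noteq> 2}} = - (\<Union>N. {w. \<forall>n\<ge>N. w n = 2})"
  by (auto simp: infinite_nat_iff_unbounded_le)

lemma sets_lam3_infinite_non2: "{w. infinite {n. w n \<noteq> 2}} \<in> sets lam3"
proof -
  have "(\<Union>N. {w. \<forall>n\<ge>N. w n = 2}) \<in> sets lam3"
    by (rule sets.countable_UN'') (simp_all add: sets_lam3_eventually_2)
  then show ?thesis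
    unfolding infinite_non2_eq using sets.compl_sets[of _ lam3] by (simp add: Compl_eq_Diff_UNIV)
qed

lemma case_nat_in_del2_cyl_Cons_iff:
  "case_nat s \<omega> \<in> del2_cyl (b # \<sigma>) \<longleftrightarrow>
     (if s = 2 then \<omega> \<in> del2_cyl (b # \<sigma>) else s = b \<and> \<omega> \<in> del2_cyl \<sigma>)"
proof -
  have Suc: "del2_prefix (case_nat s \<omega>) (Suc m) = (if s = 2 then del2_prefix \<omega> m else s # del2_prefix \<omega> m)" for m
    by (simp add: del2_prefix_def upt_conv_Cons map_Suc_upt[symmetric] comp_def del: upt_Suc)
  have "v \<in> del2_cyl (b # \<sigma>) \<longleftrightarrow> (\<exists>m. del2_prefix v (Suc m) = b # \<sigma>)" for v
  proof
    assume "v \<in> del2_cyl (b # \<sigma>)"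
    then obtain m where m: "del2_prefix v m = b # \<sigma>"
      unfolding del2_cyl_def by blast
    then have "m \<noteq> 0"
      by (rule contrapos_pn) simp
    with m show "\<exists>m. del2_prefix v (Suc m) = b # \<sigma>"
      using not0_implies_Suc by blast
  qed (auto simp: del2_cyl_def)
  also have "(\<exists>m. del2_prefix (case_nat s \<omega>) (Suc m) = b # \<sigma>) \<longleftrightarrow>
      (if s = 2 then \<omega> \<in> del2_cyl (b # \<sigma>) else s = b \<and> \<omega> \<in> del2_cyl \<sigma>)"
    unfolding Suc del2_cyl_def by auto
  finally show ?thesis .
qed

lemma measure_lam3_del2_cyl:
  "set \<sigma> \<subseteq> {0, 1} \<Longrightarrow> measure lam3 (del2_cyl \<sigma>) = (1 / 2) ^ length \<sigma>"
proof (induction \<sigma>)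
  case Nil
  then show ?case
    using prob_space.prob_space[OF prob_space_lam3] by (simp add: del2_cyl_Nil)
next
  case (Cons b \<sigma>)
  let ?p = "measure lam3 (del2_cyl (b # \<sigma>))" and ?q = "measure lam3 (del2_cyl \<sigma>)"
  have b: "b \<in> {0, 1}" using Cons.prems by simp
  have "(\<lambda>\<omega>. case_nat s \<omega>) -` del2_cyl (b # \<sigma>) =
      (if s = 2 then del2_cyl (b # \<sigma>) else if s = b then del2_cyl \<sigma> else {})" for s
    using case_nat_in_del2_cyl_Cons_iff[of s _ b \<sigma>] by auto
  then have "?p = (?p + ?q) / 3"
    using measure_lam3_case_nat[OF sets_lam3_del2_cyl, of "b # \<sigma>"] b by auto
  then show ?case
    using Cons by simp
qed

lemma measure_lam3_eventually_2: "measure lam3 {w. \<forall>n\<ge>N. w n = 2} = 0"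
proof (induction N)
  case 0
  let ?E = "{w :: nat \<Rightarrow> nat. \<forall>n\<ge>0. w n = 2}"
  have "(\<lambda>\<omega>. case_nat s \<omega>) -` ?E = (if s = 2 then ?E else {})" for s
    by (auto split: nat.split)
  then have "measure lam3 ?E = measure lam3 ?E / 3"
    using measure_lam3_case_nat[OF sets_lam3_eventually_2, of 0] by simp
  then show ?case by simp
next
  case (Suc N)
  have "(\<lambda>\<omega>. case_nat s \<omega>) -` {w. \<forall>n\<ge>Suc N. w n = 2} = {w :: nat \<Rightarrow> nat. \<forall>n\<ge>N. w n = 2}" for s
    by (auto simp: vimage_def) (metis Suc_le_D Suc_le_mono old.nat.simps(5))+
  then show ?case
    using measure_lam3_case_nat[OF sets_lam3_eventually_2, of "Suc N"] Suc by simp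
qed

lemma measure_lam3_del2_cyl_infinite:
  assumes "set \<sigma> \<subseteq> {0, 1}"
  shows "measure lam3 (del2_cyl \<sigma> \<inter> {w. infinite {n. w n \<noteq> 2}}) = (1 / 2) ^ length \<sigma>"
proof -
  interpret prob_space lam3 by (rule prob_space_lam3)
  have "{w. \<forall>n\<ge>N. w n = 2} \<in> null_sets lam3" for N
    using measure_lam3_eventually_2[of N] sets_lam3_eventually_2[of N]
    by (simp add: emeasure_eq_measure null_sets_def)
  then have null: "(\<Union>N. {w. \<forall>n\<ge>N. w n = 2}) \<in> null_sets lam3"
    by blast
  have "measure lam3 (del2_cyl \<sigma> \<inter> {w. infinite {n. w n \<noteq> 2}}) = measure lam3 (del2_cyl \<sigma>)"
    using measure_Diff_null_set[OF sets_lam3_del2_cyl null] by (simp add: infinite_non2_eq Diff_eq)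
  then show ?thesis
    using measure_lam3_del2_cyl[OF assms] by simp
qed

lemma foldl_binary_less:
  "set xs \<subseteq> {0, 1} \<Longrightarrow> foldl (\<lambda>a b. 2 * a + b) (a :: nat) xs < (a + 1) * 2 ^ length xs"
proof (induction xs arbitrary: a)
  case (Cons b xs)
  then have "foldl (\<lambda>a b. 2 * a + b) a (b # xs) < (2 * a + b + 1) * 2 ^ length xs"
    by simp
  also have "\<dots> \<le> (2 * (a + 1)) * 2 ^ length xs"
    using Cons.prems by (intro mult_le_mono1) auto
  also have "\<dots> = (a + 1) * 2 ^ length (b # xs)"
    by simp
  finally show ?case .
qed simp

lemma lenlex_index_less:
  "set \<tau> \<subseteq> {0, 1} \<Longrightarrow> lenlex_index \<tau> < 2 ^ Suc (length \<tau>) - 1"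
  using foldl_binary_less[of \<tau> 0] by (simp add: lenlex_index_def)

definition label_position :: "(nat \<Rightarrow> nat) \<Rightarrow> nat \<Rightarrow> nat" where
  "label_position y n = lenlex_index (restr y (Suc n)) - 1"

lemma label_seq_eq: "label_seq x y = (\<lambda>n. x (label_position y n))"
  by (simp add: fun_eq_iff label_seq_def label_def label_position_def)

lemma strict_mono_label_position:
  assumes y: "\<forall>n. y n \<in> {0, 1}"
  shows "strict_mono (label_position y)"
proof (rule strict_monoI_Suc)
  fix n
  have binary: "set (restr y k) \<subseteq> {0, 1}" for k
    using y by (force simp: restr_def)
  \<comment> \<open>strings of length \<open>k\<close> have indices in \<open>[2 ^ k - 1, 2 ^ (k + 1) - 1)\<close>; the first bound keeps the
    subtraction of 1 in \<open>label_position\<close> from truncating\<close>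
  have "(2::nat) \<le> 2 ^ Suc n"
    by simp
  moreover have "lenlex_index (restr y (Suc n)) < 2 ^ Suc (Suc n) - 1"
    using lenlex_index_less[OF binary, of "Suc n"] by (simp add: restr_def)
  moreover have "2 ^ Suc (Suc n) - 1 \<le> lenlex_index (restr y (Suc (Suc n)))"
    by (simp add: lenlex_index_def restr_def)
  moreover have "2 ^ Suc n - 1 \<le> lenlex_index (restr y (Suc n))"
    by (simp add: lenlex_index_def restr_def)
  ultimately show "label_position y n < label_position y (Suc n)"
    unfolding label_position_def by linarith
qed

lemma measurable_label_position: "(\<lambda>y. label_position y n) \<in> lam \<rightarrow>\<^sub>M count_space UNIV"
  unfolding lam_def label_position_def restr_def by measurable

lemma measurable_label_seq: "(\<lambda>(x, y). label_seq x y) \<in> lam3 \<Otimes>\<^sub>M lam \<rightarrow>\<^sub>M lam3"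
proof -
  have "(\<lambda>p. fst p (label_position (snd p) n)) \<in> lam3 \<Otimes>\<^sub>M lam \<rightarrow>\<^sub>M measure_pmf (pmf_of_set {0, 1, 2})" for n
    by (rule measurable_compose_countable[where f = "\<lambda>i p. fst p i",
          OF _ measurable_compose[OF measurable_snd measurable_label_position]])
       (simp add: lam3_def)
  then show ?thesis
    unfolding label_seq_eq split_beta lam3_def by (intro measurable_PiM_single') (auto simp: lam3_def)
qed

lemma measure_lam3_label_seq_vimage:
  assumes "\<forall>n. y n \<in> {0, 1}" and "G \<in> sets lam3"
  shows "measure lam3 {x. label_seq x y \<in> G} = measure lam3 G"
  using measure_PiM_pmf_reindex[of "label_position y" G "pmf_of_set {0, 1, 2}", folded lam3_def]
    strict_mono_imp_inj_on[OF strict_mono_label_position] assms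
  by (simp add: label_seq_eq)

lemma prob_space_lam: "prob_space lam"
  unfolding lam_def by (intro prob_space_PiM prob_space_measure_pmf)

lemma AE_lam_binary: "AE y in lam. \<forall>n. y n \<in> {0, 1}"
  unfolding lam_def AE_all_countable
  by (intro allI AE_PiM_component) (simp_all add: prob_space_measure_pmf AE_measure_pmf_iff)

theorem lemma6p1:
  fixes \<sigma> :: "nat list"
  assumes "set \<sigma> \<subseteq> {0, 1}"
  shows "(\<integral>x. measure lam (F_preimage x (cyl \<sigma>)) \<partial>lam3) = (1 / 2) ^ length \<sigma>"
proof -
  define G where "G = del2_cyl \<sigma> \<inter> {w. infinite {n. w n \<noteq> 2}}"
  define Q where "Q = {(x, y). label_seq x y \<in> G}"
  have G: "G \<in> sets lam3"
    unfolding G_def using sets_lam3_del2_cyl sets_lam3_infinite_non2 by blast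
  have Q: "Q \<in> sets (lam3 \<Otimes>\<^sub>M lam)"
    using measurable_sets[OF measurable_label_seq G]
    by (simp add: Q_def space_pair_measure lam_def lam3_def space_PiM vimage_def case_prod_unfold)
  have preimage: "F_preimage x (cyl \<sigma>) = Pair x -` Q" for x
    by (simp add: F_preimage_def Q_def G_def F_in_cyl_iff lam_def space_PiM)
  have measure_G: "measure lam3 G = (1 / 2) ^ length \<sigma>"
    unfolding G_def by (rule measure_lam3_del2_cyl_infinite[OF assms])
  have "AE y in lam. measure lam3 {x. (x, y) \<in> Q} = (1 / 2) ^ length \<sigma>"
    using AE_lam_binary by eventually_elim (simp add: Q_def measure_lam3_label_seq_vimage[OF _ G] measure_G)
  then show ?thesis
    using integral_measure_Pair_vimage_eq_const[OF prob_space_lam3 prob_space_lam Q] by (simp add: preimage)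
qed

end
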